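(* Under the standing assumptions, suppose moreover that $R$ is a Hirata separable extension of $R^\beta$. Then for all $g,h\in\mathcal G$ with $d(g)=r(h)$ one has $J_hJ_g=J_{gh}$ (where $J_hJ_g$ denotes the additive subgroup generated by all products $ab$ with $a\in J_h$, $b\in J_g$). In particular, $J_{g^{-1}}J_g=V_{E_g}(R)=\{r\in E_g: rx=xr\ \forall x\in R\}$ and $J_g\neq\{0\}$ for every $g\in\mathcal G$.
   Context: All rings and algebras are associative and unital. A groupoid is a nonempty set $\mathcal G$ with a partially defined associative multiplication in which every $g$ has an inverse $g^{-1}$, a left identity $r(g)=gg^{-1}$ and a right identity $d(g)=g^{-1}g$; $gh$ is defined iff $d(g)=r(h)$; $\mathcal G_0$ is the set of identities. Standing assumptions: $K$ commutative ring, $R$ a $K$-algebra, $\mathcal G$ a finite groupoid, $\beta=(\{E_g\},\{\beta_g\})$ a unital action of $\mathcal G$ on $R$: $E_g=E_{r(g)}$ is an ideal of $R$, unital with identity $1_g$ (so $1_{g^{-1}}=1_{d(g)}$), $\beta_g:E_{g^{-1}}\to E_g$ a $K$-algebra isomorphism, $\beta_e=\mathrm{id}_{E_e}$ for $e\in\mathcal G_0$, $\beta_g\beta_h(x)=\beta_{gh}(x)$ whenever $d(g)=r(h)$, $x\in E_{h^{-1}}$; $R=\bigoplus_{e\in\mathcal G_0}E_e$; and $R$ is a $\beta$-Galois extension of $R^\beta=\{r\in R:\beta_g(r1_{g^{-1}})=r1_g\ \forall g\in\mathcal G\}$: there exist $x_i,y_i\in R$ ($1\le i\le m$) with $\sum_i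 x_i\beta_g(y_i1_{g^{-1}})=1_g$ if $g\in\mathcal G_0$ and $=0$ otherwise. For $g\in\mathcal G$, $J_g=\{r\in E_g: r\beta_g(x1_{g^{-1}})=xr\ \forall x\in R\}$. A ring extension $R\supseteq S$ is Hirata separable if $R\otimes_S R$ is isomorphic, as an $R$-$R$-bimodule, to a direct summand of a finite direct sum of copies of $R$. *)

theory Defs
  imports Main
begin

text \<open>A groupoid is given by a carrier G, a (total HOL) function mul which is only
  meaningful on pairs (g,h) with d(g) = r(h), and an inverse map.\<close>

definition gdom :: "('g \<Rightarrow> 'g \<Rightarrow> 'g) \<Rightarrow> ('g \<Rightarrow> 'g) \<Rightarrow> 'g \<Rightarrow> 'g" where
  "gdom mul iv g = mul (iv g) g"

definition gran :: "('g \<Rightarrow> 'g \<Rightarrow> 'g) \<Rightarrow> ('g \<Rightarrow> 'g) \<Rightarrow> 'g \<Rightarrow> 'g" where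
  "gran mul iv g = mul g (iv g)"

definition groupoid :: "'g set \<Rightarrow> ('g \<Rightarrow> 'g \<Rightarrow> 'g) \<Rightarrow> ('g \<Rightarrow> 'g) \<Rightarrow> bool" where
  "groupoid G mul iv \<longleftrightarrow>
     G \<noteq> {} \<and>
     (\<forall>g\<in>G. iv g \<in> G \<and> iv (iv g) = g) \<and>
     (\<forall>g\<in>G. \<forall>h\<in>G. gdom mul iv g = gran mul iv h \<longrightarrow>
        mul g h \<in> G \<and> gdom mul iv (mul g h) = gdom mul iv h \<and>
        gran mul iv (mul g h) = gran mul iv g) \<and>
     (\<forall>g\<in>G. \<forall>h\<in>G. \<forall>l\<in>G. gdom mul iv g = gran mul iv h \<longrightarrow>
        gdom mul iv h = gran mul iv l \<longrightarrow> mul (mul g h) l = mul g (mul h l)) \<and>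
     (\<forall>g\<in>G. mul (gran mul iv g) g = g \<and> mul g (gdom mul iv g) = g)"

definition gidents :: "'g set \<Rightarrow> ('g \<Rightarrow> 'g \<Rightarrow> 'g) \<Rightarrow> ('g \<Rightarrow> 'g) \<Rightarrow> 'g set" where
  "gidents G mul iv = gdom mul iv ` G"

definition is_ideal :: "('r::ring_1) set \<Rightarrow> bool" where
  "is_ideal I \<longleftrightarrow> 0 \<in> I \<and> (\<forall>x\<in>I. \<forall>y\<in>I. x + y \<in> I) \<and> (\<forall>x\<in>I. - x \<in> I) \<and>
     (\<forall>x\<in>I. \<forall>r. r * x \<in> I \<and> x * r \<in> I)"

text \<open>E g is the ideal E_g, u g its identity 1_g, beta g the isomorphism
  E_{g^{-1}} to E_g. The whole ring R is the type 'r.\<close>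
definition unital_action ::
  "'g set \<Rightarrow> ('g \<Rightarrow> 'g \<Rightarrow> 'g) \<Rightarrow> ('g \<Rightarrow> 'g) \<Rightarrow> ('g \<Rightarrow> ('r::ring_1) set) \<Rightarrow> ('g \<Rightarrow> 'r)
     \<Rightarrow> ('g \<Rightarrow> 'r \<Rightarrow> 'r) \<Rightarrow> bool" where
  "unital_action G mul iv E u beta \<longleftrightarrow>
     (\<forall>g\<in>G. E g = E (gran mul iv g)) \<and>
     (\<forall>g\<in>G. is_ideal (E g) \<and> u g \<in> E g \<and> (\<forall>x\<in>E g. u g * x = x \<and> x * u g = x)) \<and>
     (\<forall>g\<in>G. bij_betw (beta g) (E (iv g)) (E g) \<and>
        (\<forall>x\<in>E (iv g). \<forall>y\<in>E (iv g).
           beta g (x + y) = beta g x + beta g y \<and> beta g (x * y) = beta g x * beta g y)) \<and>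
     (\<forall>e\<in>gidents G mul iv. \<forall>x\<in>E e. beta e x = x) \<and>
     (\<forall>g\<in>G. \<forall>h\<in>G. gdom mul iv g = gran mul iv h \<longrightarrow>
        (\<forall>x\<in>E (iv h). beta g (beta h x) = beta (mul g h) x)) \<and>
     \<comment> \<open>R is the internal direct sum of the E_e, e in G_0\<close>
     (\<forall>x::'r. \<exists>f. (\<forall>e\<in>gidents G mul iv. f e \<in> E e) \<and> x = (\<Sum>e\<in>gidents G mul iv. f e)) \<and>
     (\<forall>f. (\<forall>e\<in>gidents G mul iv. f e \<in> E e) \<and> (\<Sum>e\<in>gidents G mul iv. f e) = 0 \<longrightarrow>
        (\<forall>e\<in>gidents G mul iv. f e = 0))"

definition fixed_ring ::
  "'g set \<Rightarrow> ('g \<Rightarrow> 'g) \<Rightarrow> ('g \<Rightarrow> ('r::ring_1)) \<Rightarrow> ('g \<Rightarrow> 'r \<Rightarrow> 'r) \<Rightarrow> 'r set" where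
  "fixed_ring G iv u beta = {r. \<forall>g\<in>G. beta g (r * u (iv g)) = r * u g}"

definition beta_galois ::
  "'g set \<Rightarrow> ('g \<Rightarrow> 'g \<Rightarrow> 'g) \<Rightarrow> ('g \<Rightarrow> 'g) \<Rightarrow> ('g \<Rightarrow> ('r::ring_1)) \<Rightarrow> ('g \<Rightarrow> 'r \<Rightarrow> 'r) \<Rightarrow> bool" where
  "beta_galois G mul iv u beta \<longleftrightarrow>
     (\<exists>(m::nat) (xs::nat \<Rightarrow> 'r) (ys::nat \<Rightarrow> 'r). \<forall>g\<in>G.
        (\<Sum>i<m. xs i * beta g (ys i * u (iv g))) =
          (if g \<in> gidents G mul iv then u g else 0))"

definition Jset ::
  "('g \<Rightarrow> 'g) \<Rightarrow> ('g \<Rightarrow> ('r::ring_1) set) \<Rightarrow> ('g \<Rightarrow> 'r) \<Rightarrow> ('g \<Rightarrow> 'r \<Rightarrow> 'r) \<Rightarrow> 'g \<Rightarrow> 'r set" where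
  "Jset iv E u beta g = {r\<in>E g. \<forall>x. r * beta g (x * u (iv g)) = x * r}"

inductive_set set_prod :: "('r::ring_1) set \<Rightarrow> 'r set \<Rightarrow> 'r set" for A B where
  zero: "0 \<in> set_prod A B"
| prod: "a \<in> A \<Longrightarrow> b \<in> B \<Longrightarrow> a * b \<in> set_prod A B"
| add: "x \<in> set_prod A B \<Longrightarrow> y \<in> set_prod A B \<Longrightarrow> x + y \<in> set_prod A B"
| neg: "x \<in> set_prod A B \<Longrightarrow> - x \<in> set_prod A B"

text \<open>Elements of R \<otimes>_S R are represented by lists of pairs (formal sums of
  simple tensors x \<otimes> y); tens_eq S is the congruence presenting R \<otimes>_S R
  (as a quotient of the free commutative monoid on R \<times> R; the quotient is an
  abelian group since (-x)\<otimes>y is inverse to x\<otimes>y).\<close>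
inductive tens_eq :: "('r::ring_1) set \<Rightarrow> ('r \<times> 'r) list \<Rightarrow> ('r \<times> 'r) list \<Rightarrow> bool"
  for S where
  refl: "tens_eq S xs xs"
| sym: "tens_eq S xs ys \<Longrightarrow> tens_eq S ys xs"
| trans: "tens_eq S xs ys \<Longrightarrow> tens_eq S ys zs \<Longrightarrow> tens_eq S xs zs"
| cong: "tens_eq S xs ys \<Longrightarrow> tens_eq S (us @ xs @ vs) (us @ ys @ vs)"
| comm: "tens_eq S [p, q] [q, p]"
| zero: "tens_eq S [(0, y)] []"
| addl: "tens_eq S [(x + x', y)] [(x, y), (x', y)]"
| addr: "tens_eq S [(x, y + y')] [(x, y), (x, y')]"
| bal: "s \<in> S \<Longrightarrow> tens_eq S [(x * s, y)] [(x, s * y)]"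

definition tens_lact :: "('r::ring_1) \<Rightarrow> ('r \<times> 'r) list \<Rightarrow> ('r \<times> 'r) list" where
  "tens_lact a xs = map (\<lambda>(x, y). (a * x, y)) xs"

definition tens_ract :: "('r \<times> 'r) list \<Rightarrow> ('r::ring_1) \<Rightarrow> ('r \<times> 'r) list" where
  "tens_ract xs b = map (\<lambda>(x, y). (x, y * b)) xs"

text \<open>Elements of R^n: functions nat \<Rightarrow> R vanishing from index n on.\<close>
definition vec_in :: "nat \<Rightarrow> (nat \<Rightarrow> 'r::zero) \<Rightarrow> bool" where
  "vec_in n v \<longleftrightarrow> (\<forall>i\<ge>n. v i = 0)"

text \<open>R \<supseteq> S is Hirata separable iff R \<otimes>_S R is R-R-bimodule isomorphic to a
  direct summand of some R^n, i.e. there is an R-R-bimodule map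
  Phi : R \<otimes>_S R \<rightarrow> R^n with an R-R-bimodule left inverse Psi : R^n \<rightarrow> R \<otimes>_S R.\<close>
definition hirata_separable :: "('r::ring_1) set \<Rightarrow> bool" where
  "hirata_separable S \<longleftrightarrow>
    (\<exists>(n::nat) (Phi :: ('r \<times> 'r) list \<Rightarrow> nat \<Rightarrow> 'r) (Psi :: (nat \<Rightarrow> 'r) \<Rightarrow> ('r \<times> 'r) list).
       (\<forall>xs ys. tens_eq S xs ys \<longrightarrow> Phi xs = Phi ys) \<and>
       (\<forall>xs. vec_in n (Phi xs)) \<and>
       (\<forall>xs ys. Phi (xs @ ys) = (\<lambda>i. Phi xs i + Phi ys i)) \<and>
       (\<forall>a xs. Phi (tens_lact a xs) = (\<lambda>i. a * Phi xs i)) \<and>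
       (\<forall>b xs. Phi (tens_ract xs b) = (\<lambda>i. Phi xs i * b)) \<and>
       (\<forall>v w. vec_in n v \<longrightarrow> vec_in n w \<longrightarrow>
          tens_eq S (Psi (\<lambda>i. v i + w i)) (Psi v @ Psi w)) \<and>
       (\<forall>a v. vec_in n v \<longrightarrow> tens_eq S (Psi (\<lambda>i. a * v i)) (tens_lact a (Psi v))) \<and>
       (\<forall>b v. vec_in n v \<longrightarrow> tens_eq S (Psi (\<lambda>i. v i * b)) (tens_ract (Psi v) b)) \<and>
       (\<forall>xs. tens_eq S (Psi (Phi xs)) xs))"

end

(*
  Let beta_ext g x = beta_g (x 1_{g^-1}) be beta_g extended by zero to all of R, and
  trace x = (SUM g. beta_ext g x), which takes values in R^beta.  The Galois coordinates
  give x = (SUM j. x_j trace (y_j x)) = (SUM i. trace (x x_i) y_i).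

  Hirata separability of R over R^beta yields 1 (x) 1 = SUM j. c_j e_j in R (x)_{R^beta} R
  with c_j centralising R^beta and e_j centralising R.  The R^beta-balanced map
  x (x) y |-> x beta_ext g y turns this into 1_g = SUM j. c_j r_j with r_j in J_g.
  For c centralising R^beta, galois_proj g c = SUM i. x_i c beta_ext (g^-1) y_i lies in
  J_{g^-1}, and (galois_proj g c) r = SUM i. x_i c r y_i for r in J_g; hence
  1_g = SUM j. (galois_proj g c_j) r_j lies in J_{g^-1} J_g.  Finally every c in J_{gh}
  satisfies c = 1_{h^-1} c, which lies in J_h J_{h^-1} J_{gh}, contained in J_h J_g.
*)

theory Submission
  imports Defs
begin

lemma is_ideal_zero: "is_ideal I \<Longrightarrow> 0 \<in> I"
  and is_ideal_add: "is_ideal I \<Longrightarrow> x \<in> I \<Longrightarrow> y \<in> I \<Longrightarrow> x + y \<in> I"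
  and is_ideal_uminus: "is_ideal I \<Longrightarrow> x \<in> I \<Longrightarrow> - x \<in> I"
  and is_ideal_mult_left: "is_ideal I \<Longrightarrow> x \<in> I \<Longrightarrow> r * x \<in> I"
  and is_ideal_mult_right: "is_ideal I \<Longrightarrow> x \<in> I \<Longrightarrow> x * r \<in> I"
  unfolding is_ideal_def by blast+

lemma is_ideal_sum: "is_ideal I \<Longrightarrow> (\<And>i. i \<in> A \<Longrightarrow> f i \<in> I) \<Longrightarrow> sum f A \<in> I"
  by (induction A rule: infinite_finite_induct) (auto intro: is_ideal_zero is_ideal_add)

lemma set_prod_sum: "(\<And>j. j \<in> A \<Longrightarrow> f j \<in> set_prod X Y) \<Longrightarrow> sum f A \<in> set_prod X Y"
  by (induction A rule: infinite_finite_induct) (auto intro: set_prod.intros)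

lemma set_prod_subset:
  assumes "0 \<in> C" and "\<And>x y. x \<in> C \<Longrightarrow> y \<in> C \<Longrightarrow> x + y \<in> C" and "\<And>x. x \<in> C \<Longrightarrow> - x \<in> C"
    and "\<And>a b. a \<in> A \<Longrightarrow> b \<in> B \<Longrightarrow> a * b \<in> C"
  shows "set_prod A B \<subseteq> C"
proof
  show "x \<in> C" if "x \<in> set_prod A B" for x
    using that by induction (use assms in auto)
qed

lemma set_prod_mult_right:
  assumes "y \<in> set_prod A B" and "\<And>b. b \<in> B \<Longrightarrow> b * c \<in> C"
  shows "y * c \<in> set_prod A C"
  using assms(1)
proof induction
  case (prod a b)
  then show ?case using set_prod.prod[OF prod(1) assms(2)] by (simp add: mult.assoc)
qed (auto simp: distrib_right intro: set_prod.intros)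

section \<open>Tensor products and Hirata separability\<close>

lemma tens_eq_append:
  assumes "tens_eq S p p'" and "tens_eq S q q'" shows "tens_eq S (p @ q) (p' @ q')"
proof (rule tens_eq.trans)
  show "tens_eq S (p @ q) (p' @ q)" using tens_eq.cong[OF assms(1), of "[]" q] by simp
  show "tens_eq S (p' @ q) (p' @ q')" using tens_eq.cong[OF assms(2), of p' "[]"] by simp
qed

lemma tens_lact_zero: "tens_eq S (tens_lact 0 p) []"
proof (induction p)
  case Nil
  then show ?case by (simp add: tens_lact_def tens_eq.refl)
next
  case (Cons q p)
  have "tens_eq S ([(0, snd q)] @ tens_lact 0 p) ([] @ [])"
    by (rule tens_eq_append[OF tens_eq.zero Cons.IH])
  then show ?case by (simp add: tens_lact_def split_def)
qed

lemma tens_eq_basis_expansion: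
  fixes Psi :: "(nat \<Rightarrow> 'r::ring_1) \<Rightarrow> ('r \<times> 'r) list"
  defines "e j \<equiv> Psi (\<lambda>i. if i = j then 1 else 0)"
  assumes add: "\<forall>v w. vec_in n v \<longrightarrow> vec_in n w \<longrightarrow> tens_eq S (Psi (\<lambda>i. v i + w i)) (Psi v @ Psi w)"
    and lact: "\<forall>a v. vec_in n v \<longrightarrow> tens_eq S (Psi (\<lambda>i. a * v i)) (tens_lact a (Psi v))"
    and v: "vec_in n v"
  shows "tens_eq S (Psi v) (concat (map (\<lambda>j. tens_lact (v j) (e j)) [0..<n]))"
proof -
  \<comment> \<open>Psi is only known to be additive on vectors vanishing from n on, so induct over truncations of v.\<close>
  have "tens_eq S (Psi (\<lambda>i. if i < k then v i else 0)) (concat (map (\<lambda>j. tens_lact (v j) (e j)) [0..<k]))"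
    if "k \<le> n" for k
    using that
  proof (induction k)
    case 0
    have "vec_in n (\<lambda>i. 0)" by (simp add: vec_in_def)
    then have "tens_eq S (Psi (\<lambda>i. 0 * 0)) (tens_lact 0 (Psi (\<lambda>i. 0)))"
      using lact by blast
    then show ?case by (simp add: tens_eq.trans[OF _ tens_lact_zero])
  next
    case (Suc k)
    let ?v = "\<lambda>i. if i < k then v i else 0" and ?d = "\<lambda>i. v k * (if i = k then 1 else 0)"
    have vecs: "vec_in n ?v" "vec_in n ?d" "vec_in n (\<lambda>i. if i = k then 1 else 0)"
      using v Suc.prems unfolding vec_in_def by auto
    have "(\<lambda>i. if i < Suc k then v i else 0) = (\<lambda>i. ?v i + ?d i)"
      by (auto simp: less_Suc_eq)
    moreover have "tens_eq S (Psi (\<lambda>i. ?v i + ?d i)) (Psi ?v @ Psi ?d)"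
      using add vecs by blast
    moreover have "tens_eq S (Psi ?d) (tens_lact (v k) (e k))"
      using lact vecs unfolding e_def by blast
    ultimately show ?case
      using tens_eq.trans[OF _ tens_eq_append[OF Suc.IH]] Suc.prems by simp
  qed
  note truncated = this[OF order_refl]
  have "(\<lambda>i. if i < n then v i else 0) = v"
    using v unfolding vec_in_def by (auto simp: not_less)
  with truncated show ?thesis by simp
qed

lemma tens_map_one_central:
  fixes Phi :: "('r::ring_1 \<times> 'r) list \<Rightarrow> 'i \<Rightarrow> 'r"
  assumes cong: "\<forall>p q. tens_eq S p q \<longrightarrow> Phi p = Phi q"
    and lact: "\<forall>a p. Phi (tens_lact a p) = (\<lambda>i. a * Phi p i)"
    and ract: "\<forall>b p. Phi (tens_ract p b) = (\<lambda>i. Phi p i * b)"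
    and s: "s \<in> S"
  shows "s * Phi [(1, 1)] i = Phi [(1, 1)] i * s"
proof -
  have "tens_eq S [(1 * s, 1)] [(1, s * 1)]" using s by (rule tens_eq.bal)
  then have "Phi [(1 * s, 1)] = Phi [(1, s * 1)]" using cong by blast
  moreover have "Phi [(s * 1, 1)] = (\<lambda>i. s * Phi [(1, 1)] i)"
    using lact[rule_format, of s "[(1, 1)]"] by (simp add: tens_lact_def)
  moreover have "Phi [(1, 1 * s)] = (\<lambda>i. Phi [(1, 1)] i * s)"
    using ract[rule_format, of "[(1, 1)]" s] by (simp add: tens_ract_def)
  ultimately show ?thesis by (simp add: fun_eq_iff)
qed

lemma tens_basis_image_central:
  fixes Psi :: "(nat \<Rightarrow> 'r::ring_1) \<Rightarrow> ('r \<times> 'r) list" and j :: nat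
  defines "e \<equiv> Psi (\<lambda>i. if i = j then 1 else 0)"
  assumes lact: "\<forall>a v. vec_in n v \<longrightarrow> tens_eq S (Psi (\<lambda>i. a * v i)) (tens_lact a (Psi v))"
    and ract: "\<forall>b v. vec_in n v \<longrightarrow> tens_eq S (Psi (\<lambda>i. v i * b)) (tens_ract (Psi v) b)"
    and j: "j < n"
  shows "tens_eq S (tens_lact x e) (tens_ract e x)"
proof -
  have unit: "vec_in n (\<lambda>i. if i = j then 1 else 0)" using j by (simp add: vec_in_def)
  have commute: "(\<lambda>i. x * (if i = j then 1 else 0)) = (\<lambda>i. (if i = j then 1 else 0) * x)"
    by auto
  have "tens_eq S (Psi (\<lambda>i. x * (if i = j then 1 else 0))) (tens_lact x e)"
    using lact unit unfolding e_def by blast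
  moreover have "tens_eq S (Psi (\<lambda>i. x * (if i = j then 1 else 0))) (tens_ract e x)"
    using ract[rule_format, OF unit, of x] unfolding e_def by (simp add: commute)
  ultimately show ?thesis by (rule tens_eq.trans[OF tens_eq.sym])
qed

lemma hirata_separable_decomposition:
  fixes S :: "'r::ring_1 set"
  assumes "hirata_separable S"
  obtains c :: "nat \<Rightarrow> 'r" and n :: nat and e :: "nat \<Rightarrow> ('r \<times> 'r) list" where
    "\<And>j s. s \<in> S \<Longrightarrow> s * c j = c j * s"
    "\<And>j x. j < n \<Longrightarrow> tens_eq S (tens_lact x (e j)) (tens_ract (e j) x)"
    "tens_eq S [(1, 1)] (concat (map (\<lambda>j. tens_lact (c j) (e j)) [0..<n]))"
proof -
  obtain n and Phi :: "('r \<times> 'r) list \<Rightarrow> nat \<Rightarrow> 'r" and Psi :: "(nat \<Rightarrow> 'r) \<Rightarrow> ('r \<times> 'r) list" where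
    Phi_cong: "\<forall>p q. tens_eq S p q \<longrightarrow> Phi p = Phi q" and Phi_vec: "\<forall>p. vec_in n (Phi p)"
    and Phi_lact: "\<forall>a p. Phi (tens_lact a p) = (\<lambda>i. a * Phi p i)"
    and Phi_ract: "\<forall>b p. Phi (tens_ract p b) = (\<lambda>i. Phi p i * b)"
    and Psi_add: "\<forall>v w. vec_in n v \<longrightarrow> vec_in n w \<longrightarrow> tens_eq S (Psi (\<lambda>i. v i + w i)) (Psi v @ Psi w)"
    and Psi_lact: "\<forall>a v. vec_in n v \<longrightarrow> tens_eq S (Psi (\<lambda>i. a * v i)) (tens_lact a (Psi v))"
    and Psi_ract: "\<forall>b v. vec_in n v \<longrightarrow> tens_eq S (Psi (\<lambda>i. v i * b)) (tens_ract (Psi v) b)"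
    and Psi_Phi: "\<forall>p. tens_eq S (Psi (Phi p)) p"
    using assms unfolding hirata_separable_def by (elim exE conjE) (rule that)
  define c where "c = Phi [(1, 1)]"
  define e where "e j = Psi (\<lambda>i. if i = j then 1 else 0)" for j
  show ?thesis
  proof (rule that[of c n e])
    show "s * c j = c j * s" if "s \<in> S" for j s
      unfolding c_def by (rule tens_map_one_central[OF Phi_cong Phi_lact Phi_ract that])
    show "tens_eq S (tens_lact x (e j)) (tens_ract (e j) x)" if "j < n" for j x
      unfolding e_def by (rule tens_basis_image_central[OF Psi_lact Psi_ract that])
    show "tens_eq S [(1, 1)] (concat (map (\<lambda>j. tens_lact (c j) (e j)) [0..<n]))"
      using tens_eq.sym[OF Psi_Phi[rule_format]]
        tens_eq_basis_expansion[OF Psi_add Psi_lact Phi_vec[rule_format]]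
      unfolding c_def e_def by (rule tens_eq.trans)
  qed
qed

locale groupoid_on =
  fixes G :: "'g set" and mul :: "'g \<Rightarrow> 'g \<Rightarrow> 'g" and iv :: "'g \<Rightarrow> 'g"
  assumes groupoid: "groupoid G mul iv"
begin

abbreviation src where "src \<equiv> gdom mul iv"
abbreviation tgt where "tgt \<equiv> gran mul iv"
abbreviation idents where "idents \<equiv> gidents G mul iv"

lemma inv_closed: "g \<in> G \<Longrightarrow> iv g \<in> G"
  and inv_inv: "g \<in> G \<Longrightarrow> iv (iv g) = g"
  using groupoid unfolding groupoid_def by auto

lemma mul_closed: "g \<in> G \<Longrightarrow> h \<in> G \<Longrightarrow> src g = tgt h \<Longrightarrow> mul g h \<in> G"
  and src_mul: "g \<in> G \<Longrightarrow> h \<in> G \<Longrightarrow> src g = tgt h \<Longrightarrow> src (mul g h) = src h"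
  and tgt_mul: "g \<in> G \<Longrightarrow> h \<in> G \<Longrightarrow> src g = tgt h \<Longrightarrow> tgt (mul g h) = tgt g"
  using groupoid unfolding groupoid_def by blast+

lemma mul_assoc:
  "g \<in> G \<Longrightarrow> h \<in> G \<Longrightarrow> l \<in> G \<Longrightarrow> src g = tgt h \<Longrightarrow> src h = tgt l \<Longrightarrow>
    mul (mul g h) l = mul g (mul h l)"
  using groupoid unfolding groupoid_def by blast

lemma tgt_mul_left: "g \<in> G \<Longrightarrow> mul (tgt g) g = g"
  and mul_src_right: "g \<in> G \<Longrightarrow> mul g (src g) = g"
  using groupoid unfolding groupoid_def by blast+

lemma src_inv: "g \<in> G \<Longrightarrow> src (iv g) = tgt g"
  and tgt_inv: "g \<in> G \<Longrightarrow> tgt (iv g) = src g"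
  by (simp_all add: gdom_def gran_def inv_inv)

lemma src_in_idents: "g \<in> G \<Longrightarrow> src g \<in> idents"
  unfolding gidents_def by simp

lemma tgt_in_idents: "g \<in> G \<Longrightarrow> tgt g \<in> idents"
  by (metis src_in_idents src_inv inv_closed)

lemma idents_closed: "e \<in> idents \<Longrightarrow> e \<in> G"
  unfolding gidents_def gdom_def by (auto intro: mul_closed inv_closed src_inv)

lemma ident_simps:
  assumes "e \<in> idents" shows "src e = e" and "tgt e = e" and "iv e = e"
proof -
  obtain h where h: "h \<in> G" and e: "e = mul (iv h) h"
    using assms unfolding gidents_def gdom_def by auto
  have ih: "iv h \<in> G" "src (iv h) = tgt h" using h inv_closed src_inv by auto
  show src: "src e = e" using src_mul[OF ih(1) h ih(2)] e by (simp add: gdom_def)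
  show tgt: "tgt e = e" using tgt_mul[OF ih(1) h ih(2)] tgt_inv[OF h] e by (simp add: gdom_def)
  have "iv e = mul (tgt (iv e)) (iv e)" using tgt_mul_left[OF inv_closed[OF idents_closed[OF assms]]] ..
  also have "\<dots> = tgt e" using src tgt_inv[OF idents_closed[OF assms]] by (simp add: gran_def)
  finally show "iv e = e" using tgt by simp
qed

lemma inv_mul_cancel_left: "g \<in> G \<Longrightarrow> h \<in> G \<Longrightarrow> tgt h = src g \<Longrightarrow> mul (iv g) (mul g h) = h"
  using mul_assoc[of "iv g" g h] inv_closed src_inv tgt_mul_left[of h]
  by (simp add: gdom_def)

lemma mul_inv_cancel_left: "g \<in> G \<Longrightarrow> h \<in> G \<Longrightarrow> tgt h = tgt g \<Longrightarrow> mul g (mul (iv g) h) = h"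
  using inv_mul_cancel_left[of "iv g" h] inv_closed inv_inv src_inv by metis

lemma mul_inv_cancel_right: "g \<in> G \<Longrightarrow> h \<in> G \<Longrightarrow> src g = tgt h \<Longrightarrow> mul (mul g h) (iv h) = g"
  using mul_assoc[of g h "iv h"] inv_closed tgt_inv mul_src_right[of g]
  by (simp add: gran_def)

lemma sum_translate_left:
  assumes h: "h \<in> G"
  shows "(\<Sum>k\<in>{k\<in>G. tgt k = src h}. f (mul h k)) = (\<Sum>k\<in>{k\<in>G. tgt k = tgt h}. f k)"
proof (rule sum.reindex_bij_witness[where i = "mul (iv h)" and j = "mul h"])
  fix a assume "a \<in> {k\<in>G. tgt k = src h}"
  then show "mul (iv h) (mul h a) = a" and "mul h a \<in> {k\<in>G. tgt k = tgt h}"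
    using h inv_mul_cancel_left mul_closed tgt_mul by auto
next
  fix b assume "b \<in> {k\<in>G. tgt k = tgt h}"
  then show "mul h (mul (iv h) b) = b" and "mul (iv h) b \<in> {k\<in>G. tgt k = src h}"
    using h mul_inv_cancel_left mul_closed tgt_mul inv_closed src_inv tgt_inv by auto
qed simp

end

section \<open>Unital groupoid actions\<close>

locale unital_groupoid_action = groupoid_on G mul iv
  for G :: "'g set" and mul iv +
  fixes E :: "'g \<Rightarrow> ('r::ring_1) set" and u :: "'g \<Rightarrow> 'r" and beta :: "'g \<Rightarrow> 'r \<Rightarrow> 'r"
  assumes finite_G: "finite G"
    and unital_action: "unital_action G mul iv E u beta"
begin

lemmas action_conjuncts = unital_action[unfolded unital_action_def]

lemma E_tgt: "g \<in> G \<Longrightarrow> E g = E (tgt g)"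
  using action_conjuncts[THEN conjunct1] by blast

lemma E_ideal: "g \<in> G \<Longrightarrow> is_ideal (E g)"
  and u_in_E: "g \<in> G \<Longrightarrow> u g \<in> E g"
  and u_mult_left: "g \<in> G \<Longrightarrow> x \<in> E g \<Longrightarrow> u g * x = x"
  and u_mult_right: "g \<in> G \<Longrightarrow> x \<in> E g \<Longrightarrow> x * u g = x"
  using action_conjuncts[THEN conjunct2, THEN conjunct1] by blast+

lemma beta_bij: "g \<in> G \<Longrightarrow> bij_betw (beta g) (E (iv g)) (E g)"
  and beta_add: "g \<in> G \<Longrightarrow> x \<in> E (iv g) \<Longrightarrow> y \<in> E (iv g) \<Longrightarrow>
    beta g (x + y) = beta g x + beta g y"
  and beta_mult: "g \<in> G \<Longrightarrow> x \<in> E (iv g) \<Longrightarrow> y \<in> E (iv g) \<Longrightarrow>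
    beta g (x * y) = beta g x * beta g y"
  using action_conjuncts[THEN conjunct2, THEN conjunct2, THEN conjunct1] by blast+

lemma beta_ident: "e \<in> idents \<Longrightarrow> x \<in> E e \<Longrightarrow> beta e x = x"
  using action_conjuncts[THEN conjunct2, THEN conjunct2, THEN conjunct2, THEN conjunct1] by blast

lemma beta_comp: "g \<in> G \<Longrightarrow> h \<in> G \<Longrightarrow> src g = tgt h \<Longrightarrow> x \<in> E (iv h) \<Longrightarrow>
    beta g (beta h x) = beta (mul g h) x"
  using action_conjuncts[THEN conjunct2, THEN conjunct2, THEN conjunct2, THEN conjunct2,
      THEN conjunct1] by blast

lemma E_decomp: "\<exists>f. (\<forall>e\<in>idents. f e \<in> E e) \<and> x = (\<Sum>e\<in>idents. f e)"
  using action_conjuncts[THEN conjunct2, THEN conjunct2, THEN conjunct2, THEN conjunct2,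
      THEN conjunct2, THEN conjunct1] by blast

lemma E_decomp_unique:
  "\<forall>e\<in>idents. f e \<in> E e \<Longrightarrow> (\<Sum>e\<in>idents. f e) = 0 \<Longrightarrow> e \<in> idents \<Longrightarrow> f e = 0"
  using action_conjuncts[THEN conjunct2, THEN conjunct2, THEN conjunct2, THEN conjunct2,
      THEN conjunct2, THEN conjunct2] by blast

lemmas E_zero = is_ideal_zero[OF E_ideal]
  and E_add = is_ideal_add[OF E_ideal]
  and E_uminus = is_ideal_uminus[OF E_ideal]
  and E_mult_left = is_ideal_mult_left[OF E_ideal]
  and E_mult_right = is_ideal_mult_right[OF E_ideal]
  and E_sum = is_ideal_sum[OF E_ideal]

lemma finite_idents: "finite idents"
  unfolding gidents_def using finite_G by simp

lemma E_inv: "g \<in> G \<Longrightarrow> E (iv g) = E (src g)"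
  using E_tgt[OF inv_closed] tgt_inv by simp

lemma u_unique: "g \<in> G \<Longrightarrow> h \<in> G \<Longrightarrow> E g = E h \<Longrightarrow> u g = u h"
  by (metis u_in_E u_mult_left u_mult_right)

lemma u_tgt: "g \<in> G \<Longrightarrow> u g = u (tgt g)"
  using E_tgt tgt_in_idents idents_closed u_unique by blast

lemma u_inv: "g \<in> G \<Longrightarrow> u (iv g) = u (src g)"
  using E_inv src_in_idents idents_closed inv_closed u_unique by blast

lemma u_idem: "g \<in> G \<Longrightarrow> u g * u g = u g"
  using u_in_E u_mult_left by blast

lemma u_central:
  assumes g: "g \<in> G" shows "x * u g = u g * x"
proof -
  have "x * u g = u g * (x * u g)" using u_mult_left[OF g E_mult_left[OF g u_in_E[OF g]]] ..
  also have "\<dots> = (u g * x) * u g" by (simp add: mult.assoc)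
  also have "\<dots> = u g * x" using u_mult_right[OF g E_mult_right[OF g u_in_E[OF g]]] .
  finally show ?thesis .
qed

lemma E_idents_disjoint:
  assumes e: "e \<in> idents" "e' \<in> idents" "e \<noteq> e'" and x: "x \<in> E e" "x \<in> E e'"
  shows "x = 0"
proof -
  define f where "f k = (if k = e then x else if k = e' then - x else 0)" for k
  have f_in_E: "\<forall>k\<in>idents. f k \<in> E k"
    using e x by (auto simp: f_def intro: E_uminus E_zero idents_closed)
  have "(\<Sum>k\<in>idents. f k) = (\<Sum>k\<in>{e, e'}. f k)"
    by (rule sum.mono_neutral_right) (use finite_idents e in \<open>auto simp: f_def\<close>)
  also have "\<dots> = 0" using e by (simp add: f_def)
  finally have "f e = 0" using E_decomp_unique[OF f_in_E] e by blast
  then show ?thesis by (simp add: f_def)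
qed

lemma E_mult_orth:
  "k \<in> G \<Longrightarrow> h \<in> G \<Longrightarrow> tgt k \<noteq> tgt h \<Longrightarrow> x \<in> E k \<Longrightarrow> y \<in> E h \<Longrightarrow> x * y = 0"
  by (rule E_idents_disjoint[of "tgt k" "tgt h"])
    (auto simp: tgt_in_idents E_tgt[symmetric] intro: E_mult_left E_mult_right)

lemma sum_idents_u: "(\<Sum>e\<in>idents. u e) = 1"
proof -
  obtain f where f: "\<forall>e\<in>idents. f e \<in> E e" and one: "(\<Sum>e\<in>idents. f e) = 1"
    using E_decomp[of 1] by auto
  have "u e = f e" if e: "e \<in> idents" for e
  proof -
    have "u e * f k = 0" if k: "k \<in> idents - {e}" for k
      by (rule E_idents_disjoint[of e k])
        (use e k f in \<open>auto intro: E_mult_left E_mult_right u_in_E idents_closed\<close>)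
    then have rest: "(\<Sum>k\<in>idents - {e}. u e * f k) = 0"
      by (intro sum.neutral) blast
    have "u e = u e * (\<Sum>k\<in>idents. f k)"
      by (simp only: one mult.right_neutral)
    also have "\<dots> = (\<Sum>k\<in>idents. u e * f k)"
      by (rule sum_distrib_left)
    also have "\<dots> = u e * f e + (\<Sum>k\<in>idents - {e}. u e * f k)"
      by (rule sum.remove[OF finite_idents e])
    also have "\<dots> = f e"
      using rest u_mult_left[OF idents_closed[OF e]] f e by simp
    finally show ?thesis .
  qed
  then have "(\<Sum>e\<in>idents. u e) = (\<Sum>e\<in>idents. f e)"
    by (intro sum.cong) auto
  also note one
  finally show ?thesis .
qed

lemma sum_idents_restrict: "(\<Sum>k\<in>G. if k \<in> idents then f k else 0) = (\<Sum>k\<in>idents. f k)"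
  using sum.inter_restrict[OF finite_G, of f idents] idents_closed by (simp add: Int_absorb1 subsetI)

lemma sum_idents_mult_u: "(\<Sum>k\<in>idents. z * u k) = z"
  by (simp add: sum_distrib_left[symmetric] sum_idents_u)

definition beta_ext :: "'g \<Rightarrow> 'r \<Rightarrow> 'r" where
  "beta_ext g x = beta g (x * u (iv g))"

abbreviation fixed where "fixed \<equiv> fixed_ring G iv u beta"

definition trace :: "'r \<Rightarrow> 'r" where
  "trace z = (\<Sum>k\<in>G. beta_ext k z)"

lemma mult_u_inv_in_E: "g \<in> G \<Longrightarrow> x * u (iv g) \<in> E (iv g)"
  using E_mult_left[OF inv_closed u_in_E[OF inv_closed]] .

lemma beta_ext_in_E: "g \<in> G \<Longrightarrow> beta_ext g x \<in> E g"
  unfolding beta_ext_def using beta_bij mult_u_inv_in_E by (meson bij_betw_apply)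

lemma beta_ext_eq: "g \<in> G \<Longrightarrow> y \<in> E (iv g) \<Longrightarrow> beta_ext g y = beta g y"
  unfolding beta_ext_def using u_mult_right[OF inv_closed] by simp

lemma beta_ext_add: "g \<in> G \<Longrightarrow> beta_ext g (x + y) = beta_ext g x + beta_ext g y"
  unfolding beta_ext_def by (simp add: distrib_right beta_add mult_u_inv_in_E)

lemma beta_ext_zero: "g \<in> G \<Longrightarrow> beta_ext g 0 = 0"
  using beta_ext_add[of g 0 0] by simp

lemma beta_ext_sum: "g \<in> G \<Longrightarrow> beta_ext g (sum f A) = (\<Sum>a\<in>A. beta_ext g (f a))"
  by (induction A rule: infinite_finite_induct) (auto simp: beta_ext_zero beta_ext_add)

lemma mult_u_distrib:
  assumes g: "g \<in> G" shows "x * y * u g = (x * u g) * (y * u g)"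
proof -
  have "(x * u g) * (y * u g) = x * (y * u g) * u g"
    by (simp add: mult.assoc u_central[OF g, of y])
  also have "\<dots> = x * y * u g" by (simp add: mult.assoc u_idem[OF g])
  finally show ?thesis ..
qed

lemma beta_ext_mult: "g \<in> G \<Longrightarrow> beta_ext g (x * y) = beta_ext g x * beta_ext g y"
  unfolding beta_ext_def by (simp add: mult_u_distrib inv_closed beta_mult mult_u_inv_in_E)

lemma beta_ext_one: assumes g: "g \<in> G" shows "beta_ext g 1 = u g"
proof -
  obtain y where y: "y \<in> E (iv g)" "u g = beta g y"
    using beta_bij[OF g] u_in_E[OF g] by (metis bij_betw_imp_surj_on imageE)
  have "beta_ext g 1 * u g = beta g (u (iv g) * y)"
    unfolding beta_ext_def using beta_mult[OF g u_in_E[OF inv_closed[OF g]] y(1)] y by simp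
  also have "\<dots> = u g" using u_mult_left[OF inv_closed[OF g] y(1)] y by simp
  finally show ?thesis using u_mult_right[OF g beta_ext_in_E[OF g]] by simp
qed

lemma beta_ext_ident: "e \<in> idents \<Longrightarrow> beta_ext e x = x * u e"
  unfolding beta_ext_def
  using ident_simps beta_ident E_mult_left[OF idents_closed u_in_E[OF idents_closed]] by simp

lemma beta_ext_comp:
  assumes g: "g \<in> G" and h: "h \<in> G" and gh: "src g = tgt h"
  shows "beta_ext g (beta_ext h x) = beta_ext (mul g h) x"
proof -
  have "beta_ext h x \<in> E (iv g)" using beta_ext_in_E[OF h] E_tgt[OF h] E_inv[OF g] gh by simp
  then have "beta_ext g (beta_ext h x) = beta g (beta h (x * u (iv h)))"
    using beta_ext_eq[OF g] by (simp add: beta_ext_def)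
  also have "\<dots> = beta (mul g h) (x * u (iv h))" using beta_comp[OF g h gh mult_u_inv_in_E[OF h]] .
  also have "u (iv h) = u (iv (mul g h))"
    using u_inv[OF h] u_inv[OF mul_closed[OF g h gh]] src_mul[OF g h gh] by simp
  finally show ?thesis by (simp add: beta_ext_def)
qed

lemma beta_ext_inv: assumes g: "g \<in> G" shows "beta_ext g (beta_ext (iv g) y) = y * u g"
proof -
  have "beta_ext g (beta_ext (iv g) y) = beta_ext (tgt g) y"
    using beta_ext_comp[OF g inv_closed[OF g]] tgt_inv[OF g] by (simp add: gran_def)
  then show ?thesis using beta_ext_ident[OF tgt_in_idents[OF g]] u_tgt[OF g] by simp
qed

lemma beta_ext_beta_ext:
  assumes h: "h \<in> G" and k: "k \<in> G"
  shows "beta_ext h (beta_ext k z) = (if tgt k = src h then beta_ext (mul h k) z else 0)"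
proof (cases "tgt k = src h")
  case True
  then show ?thesis using beta_ext_comp[OF h k] by simp
next
  case False
  have "beta_ext k z * u (iv h) = 0"
    by (rule E_mult_orth[OF k inv_closed[OF h]])
      (use False tgt_inv[OF h] beta_ext_in_E[OF k] u_in_E[OF inv_closed[OF h]] in auto)
  then show ?thesis using False beta_ext_zero[OF h] by (simp add: beta_ext_def)
qed

lemma beta_ext_mult_u:
  assumes h: "h \<in> G" and k: "k \<in> G"
  shows "beta_ext k z * u h = (if tgt k = tgt h then beta_ext k z else 0)"
proof (cases "tgt k = tgt h")
  case True
  then have "u h = u k" using u_tgt[OF h] u_tgt[OF k] by simp
  then show ?thesis using True u_mult_right[OF k beta_ext_in_E[OF k]] by simp
next
  case False
  then show ?thesis using E_mult_orth[OF k h False beta_ext_in_E[OF k] u_in_E[OF h]] by simp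
qed

lemma beta_ext_fixed: "g \<in> G \<Longrightarrow> s \<in> fixed \<Longrightarrow> beta_ext g s = s * u g"
  unfolding fixed_ring_def beta_ext_def by blast

lemma beta_ext_fixed_mult: "g \<in> G \<Longrightarrow> s \<in> fixed \<Longrightarrow> beta_ext g (s * y) = s * beta_ext g y"
  by (simp add: beta_ext_mult beta_ext_fixed mult.assoc u_mult_left beta_ext_in_E)

lemma trace_fixed: "trace z \<in> fixed"
proof -
  have "beta_ext h (trace z) = trace z * u h" if h: "h \<in> G" for h
  proof -
    have "beta_ext h (trace z) = (\<Sum>k\<in>G. if tgt k = src h then beta_ext (mul h k) z else 0)"
      unfolding trace_def beta_ext_sum[OF h] by (rule sum.cong) (simp_all add: beta_ext_beta_ext[OF h])
    also have "\<dots> = (\<Sum>k\<in>{k\<in>G. tgt k = src h}. beta_ext (mul h k) z)"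
      by (rule sum.inter_filter[OF finite_G, symmetric])
    also have "\<dots> = (\<Sum>k\<in>{k\<in>G. tgt k = tgt h}. beta_ext k z)"
      by (rule sum_translate_left[OF h])
    also have "\<dots> = (\<Sum>k\<in>G. if tgt k = tgt h then beta_ext k z else 0)"
      by (rule sum.inter_filter[OF finite_G])
    also have "\<dots> = trace z * u h"
      unfolding trace_def using beta_ext_mult_u[OF h] by (simp add: sum_distrib_right)
    finally show ?thesis .
  qed
  then show ?thesis unfolding fixed_ring_def beta_ext_def by blast
qed

abbreviation J where "J \<equiv> Jset iv E u beta"

lemma J_iff: "r \<in> J g \<longleftrightarrow> r \<in> E g \<and> (\<forall>x. r * beta_ext g x = x * r)"
  unfolding Jset_def beta_ext_def by simp

lemma J_zero: "g \<in> G \<Longrightarrow> 0 \<in> J g"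
  and J_add: "g \<in> G \<Longrightarrow> a \<in> J g \<Longrightarrow> b \<in> J g \<Longrightarrow> a + b \<in> J g"
  and J_uminus: "g \<in> G \<Longrightarrow> a \<in> J g \<Longrightarrow> - a \<in> J g"
  by (simp_all add: J_iff E_zero E_add E_uminus distrib_left distrib_right)

lemma J_mult:
  assumes g: "g \<in> G" and h: "h \<in> G" and gh: "src g = tgt h" and a: "a \<in> J h" and b: "b \<in> J g"
  shows "a * b \<in> J (mul g h)"
proof -
  have "E (mul g h) = E g"
    using E_tgt[OF mul_closed[OF g h gh]] tgt_mul[OF g h gh] E_tgt[OF g] by simp
  then have "a * b \<in> E (mul g h)" using b E_mult_left[OF g] by (simp add: J_iff)
  moreover have "a * b * beta_ext (mul g h) x = x * (a * b)" for x
  proof -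
    have "b * beta_ext g (beta_ext h x) = beta_ext h x * b"
      using b by (simp add: J_iff)
    then have "b * beta_ext (mul g h) x = beta_ext h x * b"
      by (simp add: beta_ext_comp[OF g h gh])
    then show ?thesis using a by (simp add: J_iff mult.assoc flip: mult.assoc[of a])
  qed
  ultimately show ?thesis by (simp add: J_iff)
qed

lemma set_prod_J_subset:
  "g \<in> G \<Longrightarrow> h \<in> G \<Longrightarrow> src g = tgt h \<Longrightarrow> set_prod (J h) (J g) \<subseteq> J (mul g h)"
  by (rule set_prod_subset) (auto intro: J_zero J_add J_uminus J_mult mul_closed)

lemma J_inv_unit: assumes r: "r \<in> J g" and g: "g \<in> G" shows "u (iv g) * r = r"
proof -
  have "beta_ext g (u (iv g)) = beta_ext g 1"
    by (simp add: beta_ext_def u_idem[OF inv_closed[OF g]])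
  then have "r * beta_ext g (u (iv g)) = r"
    using r u_mult_right[OF g] by (simp add: beta_ext_one[OF g] J_iff)
  then show ?thesis using r by (simp add: J_iff)
qed

lemma J_ident:
  assumes e: "e \<in> idents" shows "J e = {r\<in>E e. \<forall>x. r * x = x * r}"
proof -
  have "r * beta_ext e x = r * x" if "r \<in> E e" for r x
    using beta_ext_ident[OF e] u_mult_right[OF idents_closed[OF e] E_mult_right[OF idents_closed[OF e] that]]
    by (simp add: mult.assoc)
  then have "r \<in> J e \<longleftrightarrow> r \<in> E e \<and> (\<forall>x. r * x = x * r)" for r
    by (cases "r \<in> E e") (simp_all add: J_iff)
  then show ?thesis by blast
qed

definition tensor_eval :: "'g \<Rightarrow> ('r \<times> 'r) list \<Rightarrow> 'r" where
  "tensor_eval g p = sum_list (map (\<lambda>(a, b). a * beta_ext g b) p)"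

lemma tensor_eval_append: "tensor_eval g (p @ q) = tensor_eval g p + tensor_eval g q"
  unfolding tensor_eval_def by simp

lemma tensor_eval_lact: "tensor_eval g (tens_lact a p) = a * tensor_eval g p"
  unfolding tensor_eval_def tens_lact_def
  by (induction p) (auto simp: distrib_left mult.assoc)

lemma tensor_eval_ract: "g \<in> G \<Longrightarrow> tensor_eval g (tens_ract p b) = tensor_eval g p * beta_ext g b"
  unfolding tensor_eval_def tens_ract_def
  by (induction p) (auto simp: distrib_right mult.assoc beta_ext_mult)

lemma tensor_eval_in_E: "g \<in> G \<Longrightarrow> tensor_eval g p \<in> E g"
  unfolding tensor_eval_def
  by (induction p) (auto intro: E_zero E_add E_mult_left beta_ext_in_E)

lemma tensor_eval_cong:
  assumes g: "g \<in> G" shows "tens_eq fixed p q \<Longrightarrow> tensor_eval g p = tensor_eval g q"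
proof (induction rule: tens_eq.induct)
  case (cong p q us vs)
  then show ?case by (simp add: tensor_eval_append)
next
  case (comm p q)
  then show ?case by (simp add: tensor_eval_def add.commute)
next
  case (addl x x' y)
  then show ?case by (simp add: tensor_eval_def distrib_right)
next
  case (addr x y y')
  then show ?case by (simp add: tensor_eval_def distrib_left beta_ext_add[OF g])
next
  case (bal s x y)
  then show ?case by (simp add: tensor_eval_def beta_ext_fixed_mult[OF g] mult.assoc)
qed (simp_all add: tensor_eval_def)

lemma tensor_eval_concat_lact:
  "tensor_eval g (concat (map (\<lambda>j. tens_lact (c j) (e j)) [0..<n])) = (\<Sum>j<n. c j * tensor_eval g (e j))"
  by (induction n) (simp_all add: tensor_eval_append tensor_eval_lact, simp add: tensor_eval_def)

lemma tensor_eval_in_J: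
  assumes g: "g \<in> G" and central: "\<And>x. tens_eq fixed (tens_lact x p) (tens_ract p x)"
  shows "tensor_eval g p \<in> J g"
proof -
  have "x * tensor_eval g p = tensor_eval g p * beta_ext g x" for x
    using tensor_eval_cong[OF g central[of x]] by (simp add: tensor_eval_lact tensor_eval_ract[OF g])
  then show ?thesis using tensor_eval_in_E[OF g] by (simp add: J_iff)
qed

lemma u_centralizer_J_decomposition:
  assumes "hirata_separable fixed" and g: "g \<in> G"
  obtains c :: "nat \<Rightarrow> 'r" and n and r where "\<And>j s. s \<in> fixed \<Longrightarrow> s * c j = c j * s"
    and "\<And>j. j < n \<Longrightarrow> r j \<in> J g" and "(\<Sum>j<n. c j * r j) = u g"
proof -
  obtain c n e where c: "\<And>j s. s \<in> fixed \<Longrightarrow> s * c j = c j * s"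
    and e: "\<And>j x. j < n \<Longrightarrow> tens_eq fixed (tens_lact x (e j)) (tens_ract (e j) x)"
    and one: "tens_eq fixed [(1, 1)] (concat (map (\<lambda>j. tens_lact (c j) (e j)) [0..<n]))"
    using hirata_separable_decomposition[OF assms(1)] by blast
  have "(\<Sum>j<n. c j * tensor_eval g (e j)) = tensor_eval g [(1, 1)]"
    using tensor_eval_cong[OF g one] by (simp add: tensor_eval_concat_lact)
  also have "\<dots> = u g"
    by (simp add: tensor_eval_def beta_ext_one[OF g])
  finally have sum: "(\<Sum>j<n. c j * tensor_eval g (e j)) = u g" .
  have J: "tensor_eval g (e j) \<in> J g" if "j < n" for j
    using tensor_eval_in_J[OF g e[OF that]] .
  show ?thesis
    by (rule that[of c n "\<lambda>j. tensor_eval g (e j)"]) (use c J sum in auto)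
qed

end

section \<open>Galois coordinates\<close>

locale galois_coordinates = unital_groupoid_action G mul iv E u beta
  for G :: "'g set" and mul iv and E :: "'g \<Rightarrow> ('r::ring_1) set" and u beta +
  fixes m :: nat and xs ys :: "nat \<Rightarrow> 'r"
  assumes galois: "\<forall>g\<in>G. (\<Sum>i<m. xs i * beta g (ys i * u (iv g))) = (if g \<in> idents then u g else 0)"
begin

lemma galois_beta_ext: "g \<in> G \<Longrightarrow> (\<Sum>i<m. xs i * beta_ext g (ys i)) = (if g \<in> idents then u g else 0)"
  using galois unfolding beta_ext_def by blast

lemma trace_expansion_left: "(\<Sum>j<m. xs j * trace (ys j * z)) = z"
proof -
  have "(\<Sum>j<m. xs j * trace (ys j * z)) = (\<Sum>j<m. \<Sum>k\<in>G. xs j * beta_ext k (ys j) * beta_ext k z)"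
    unfolding trace_def by (simp add: sum_distrib_left beta_ext_mult mult.assoc)
  also have "\<dots> = (\<Sum>k\<in>G. (\<Sum>j<m. xs j * beta_ext k (ys j)) * beta_ext k z)"
    by (subst sum.swap) (simp add: sum_distrib_right)
  also have "\<dots> = (\<Sum>k\<in>G. if k \<in> idents then u k * beta_ext k z else 0)"
    by (rule sum.cong) (auto simp: galois_beta_ext)
  also have "\<dots> = (\<Sum>k\<in>idents. z * u k)"
    unfolding sum_idents_restrict
    by (rule sum.cong) (auto simp: beta_ext_ident u_mult_left E_mult_left u_in_E idents_closed)
  finally show ?thesis by (simp add: sum_idents_mult_u)
qed

lemma galois_beta_ext_right:
  assumes k: "k \<in> G" shows "(\<Sum>i<m. beta_ext k (xs i) * ys i) = (if k \<in> idents then u k else 0)"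
proof -
  have "beta_ext k (xs i) * ys i = beta_ext k (xs i * beta_ext (iv k) (ys i))" for i
  proof -
    have "beta_ext k (xs i) * ys i = beta_ext k (xs i) * u k * ys i"
      using u_mult_right[OF k beta_ext_in_E[OF k]] by simp
    also have "\<dots> = beta_ext k (xs i) * (ys i * u k)"
      by (simp add: mult.assoc u_central[OF k, of "ys i"])
    finally show ?thesis by (simp add: beta_ext_inv[OF k] beta_ext_mult[OF k])
  qed
  then have "(\<Sum>i<m. beta_ext k (xs i) * ys i) = beta_ext k (\<Sum>i<m. xs i * beta_ext (iv k) (ys i))"
    by (simp add: beta_ext_sum[OF k])
  also have "\<dots> = beta_ext k (if iv k \<in> idents then u (iv k) else 0)"
    using galois_beta_ext[OF inv_closed[OF k]] by simp
  also have "\<dots> = (if k \<in> idents then u k else 0)"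
  proof (cases "k \<in> idents")
    case True
    then show ?thesis using ident_simps(3) beta_ext_ident u_idem[OF k] by simp
  next
    case False
    then have "iv k \<notin> idents" using ident_simps(3) inv_inv[OF k] by metis
    then show ?thesis using False beta_ext_zero[OF k] by simp
  qed
  finally show ?thesis .
qed

lemma trace_expansion_right: "(\<Sum>i<m. trace (w * xs i) * ys i) = w"
proof -
  have "(\<Sum>i<m. trace (w * xs i) * ys i) = (\<Sum>i<m. \<Sum>k\<in>G. beta_ext k w * (beta_ext k (xs i) * ys i))"
    unfolding trace_def by (simp add: sum_distrib_right beta_ext_mult mult.assoc)
  also have "\<dots> = (\<Sum>k\<in>G. beta_ext k w * (\<Sum>i<m. beta_ext k (xs i) * ys i))"
    by (subst sum.swap) (simp add: sum_distrib_left)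
  also have "\<dots> = (\<Sum>k\<in>G. if k \<in> idents then beta_ext k w * u k else 0)"
    by (rule sum.cong) (auto simp: galois_beta_ext_right)
  also have "\<dots> = (\<Sum>k\<in>idents. w * u k)"
    unfolding sum_idents_restrict
    by (rule sum.cong) (auto simp: beta_ext_ident mult.assoc u_idem idents_closed)
  finally show ?thesis by (simp add: sum_idents_mult_u)
qed

lemma sum_xs_ys_mult_u: assumes g: "g \<in> G" shows "(\<Sum>i<m. xs i * ys i) * u g = u g"
proof -
  have e: "tgt g \<in> idents" using tgt_in_idents[OF g] .
  have "(\<Sum>i<m. xs i * beta_ext (tgt g) (ys i)) = u (tgt g)"
    using galois_beta_ext[OF idents_closed[OF e]] e by simp
  then show ?thesis using beta_ext_ident[OF e] u_tgt[OF g] by (simp add: sum_distrib_right mult.assoc)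
qed

definition galois_proj :: "'g \<Rightarrow> 'r \<Rightarrow> 'r" where
  "galois_proj g c = (\<Sum>i<m. xs i * c * beta_ext (iv g) (ys i))"

lemma galois_proj_in_J:
  assumes g: "g \<in> G" and c: "\<And>s. s \<in> fixed \<Longrightarrow> s * c = c * s"
  shows "galois_proj g c \<in> J (iv g)"
proof -
  let ?b = "beta_ext (iv g)"
  have "x * galois_proj g c = galois_proj g c * ?b x" for x
  proof -
    \<comment> \<open>Expand x by the left trace identity, move the traces (elements of R^beta) past c
      and into ?b, and collapse by the right trace identity.\<close>
    have "x * galois_proj g c = (\<Sum>i<m. (\<Sum>j<m. xs j * trace (ys j * (x * xs i))) * c * ?b (ys i))"
      unfolding galois_proj_def trace_expansion_left by (simp add: sum_distrib_left mult.assoc)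
    also have "\<dots> = (\<Sum>i<m. \<Sum>j<m. xs j * c * ?b (trace (ys j * x * xs i) * ys i))"
      by (simp add: sum_distrib_right mult.assoc c[OF trace_fixed] beta_ext_fixed_mult[OF inv_closed[OF g] trace_fixed])
    also have "\<dots> = (\<Sum>j<m. xs j * c * ?b (\<Sum>i<m. trace (ys j * x * xs i) * ys i))"
      by (subst sum.swap) (simp add: beta_ext_sum[OF inv_closed[OF g]] sum_distrib_left)
    also have "\<dots> = galois_proj g c * ?b x"
      unfolding galois_proj_def trace_expansion_right
      by (simp add: beta_ext_mult[OF inv_closed[OF g]] sum_distrib_right mult.assoc)
    finally show ?thesis .
  qed
  moreover have "galois_proj g c \<in> E (iv g)"
    unfolding galois_proj_def using g by (auto intro!: E_sum E_mult_left beta_ext_in_E inv_closed)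
  ultimately show ?thesis by (simp add: J_iff)
qed

lemma galois_proj_mult_J:
  assumes g: "g \<in> G" and r: "r \<in> J g"
  shows "galois_proj g c * r = (\<Sum>i<m. xs i * c * r * ys i)"
proof -
  have "beta_ext (iv g) (ys i) * r = r * ys i" for i
  proof -
    have "beta_ext (iv g) (ys i) * r = r * beta_ext g (beta_ext (iv g) (ys i))"
      using r by (simp add: J_iff)
    also have "\<dots> = r * ys i"
      using beta_ext_inv[OF g] u_mult_right[OF g E_mult_right[OF g]] r by (simp add: J_iff mult.assoc[symmetric])
    finally show ?thesis .
  qed
  then show ?thesis unfolding galois_proj_def by (simp add: sum_distrib_right mult.assoc)
qed

lemma u_in_set_prod_J_of_decomposition:
  assumes g: "g \<in> G" and "finite A"
    and c: "\<And>j s. j \<in> A \<Longrightarrow> s \<in> fixed \<Longrightarrow> s * c j = c j * s"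
    and r: "\<And>j. j \<in> A \<Longrightarrow> r j \<in> J g"
    and sum: "(\<Sum>j\<in>A. c j * r j) = u g"
  shows "u g \<in> set_prod (J (iv g)) (J g)"
proof -
  have "(\<Sum>j\<in>A. galois_proj g (c j) * r j) = (\<Sum>i<m. xs i * (\<Sum>j\<in>A. c j * r j) * ys i)"
    using galois_proj_mult_J[OF g r]
    by (simp add: sum.swap[of _ A] sum_distrib_left sum_distrib_right mult.assoc)
  also have "\<dots> = (\<Sum>i<m. xs i * ys i) * u g"
    unfolding sum by (simp add: sum_distrib_right mult.assoc u_central[OF g, symmetric])
  also have "\<dots> = u g" by (rule sum_xs_ys_mult_u[OF g])
  finally have "u g = (\<Sum>j\<in>A. galois_proj g (c j) * r j)" ..
  also have "\<dots> \<in> set_prod (J (iv g)) (J g)"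
    by (intro set_prod_sum set_prod.prod galois_proj_in_J[OF g] c r)
  finally show ?thesis .
qed

lemma u_in_set_prod_J:
  assumes "hirata_separable fixed" and g: "g \<in> G"
  shows "u g \<in> set_prod (J (iv g)) (J g)"
proof (rule u_centralizer_J_decomposition[OF assms])
  fix c :: "nat \<Rightarrow> 'r" and n r
  assume "\<And>j s. s \<in> fixed \<Longrightarrow> s * c j = c j * s" and "\<And>j. j < n \<Longrightarrow> r j \<in> J g"
    and "(\<Sum>j<n. c j * r j) = u g"
  then show ?thesis by (intro u_in_set_prod_J_of_decomposition[OF g finite_lessThan, where c = c and r = r]) simp_all
qed

lemma set_prod_J_eq:
  assumes hirata: "hirata_separable fixed" and g: "g \<in> G" and h: "h \<in> G" and gh: "src g = tgt h"
  shows "set_prod (J h) (J g) = J (mul g h)"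
proof
  show "set_prod (J h) (J g) \<subseteq> J (mul g h)" by (rule set_prod_J_subset[OF g h gh])
next
  show "J (mul g h) \<subseteq> set_prod (J h) (J g)"
  proof
    fix c assume c: "c \<in> J (mul g h)"
    have gh_G: "mul g h \<in> G" and src_gh: "src (mul g h) = tgt (iv h)"
      using mul_closed[OF g h gh] src_mul[OF g h gh] tgt_inv[OF h] by simp_all
    have "u (iv h) \<in> set_prod (J h) (J (iv h))"
      using u_in_set_prod_J[OF hirata inv_closed[OF h]] inv_inv[OF h] by simp
    then have "u (iv h) * c \<in> set_prod (J h) (J g)"
      by (rule set_prod_mult_right)
        (use J_mult[OF gh_G inv_closed[OF h] src_gh _ c] mul_inv_cancel_right[OF g h gh] in simp)
    moreover have "u (iv h) = u (iv (mul g h))"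
      using u_inv[OF h] u_inv[OF gh_G] src_mul[OF g h gh] by simp
    ultimately show "c \<in> set_prod (J h) (J g)"
      using J_inv_unit[OF c gh_G] by simp
  qed
qed

lemma set_prod_J_inv_J:
  assumes "hirata_separable fixed" and g: "g \<in> G"
  shows "set_prod (J (iv g)) (J g) = {r\<in>E g. \<forall>x. r * x = x * r}"
proof -
  have "set_prod (J (iv g)) (J g) = J (mul g (iv g))"
    using set_prod_J_eq[OF assms inv_closed[OF g]] tgt_inv[OF g] by simp
  also have "mul g (iv g) = tgt g" by (simp add: gran_def)
  finally show ?thesis using J_ident[OF tgt_in_idents[OF g]] E_tgt[OF g] by simp
qed

lemma J_nonzero:
  assumes "hirata_separable fixed" and g: "g \<in> G" and "u g \<noteq> 0"
  shows "J g \<noteq> {0}"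
proof
  assume "J g = {0}"
  then have "set_prod (J (iv g)) (J g) \<subseteq> {0}" by (intro set_prod_subset) auto
  then show False using u_in_set_prod_J[OF assms(1,2)] assms(3) by blast
qed

end

theorem lemma3p4:
  fixes G :: "'g set" and mul :: "'g \<Rightarrow> 'g \<Rightarrow> 'g" and iv :: "'g \<Rightarrow> 'g"
    and E :: "'g \<Rightarrow> ('r::ring_1) set" and u :: "'g \<Rightarrow> 'r" and beta :: "'g \<Rightarrow> 'r \<Rightarrow> 'r"
  assumes "groupoid G mul iv" and "finite G"
    and "unital_action G mul iv E u beta"
    and "\<forall>g\<in>G. u g \<noteq> 0"
    and "beta_galois G mul iv u beta"
    and "hirata_separable (fixed_ring G iv u beta)"
  shows "(\<forall>g\<in>G. \<forall>h\<in>G. gdom mul iv g = gran mul iv h \<longrightarrow>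
            set_prod (Jset iv E u beta h) (Jset iv E u beta g) = Jset iv E u beta (mul g h))
       \<and> (\<forall>g\<in>G. set_prod (Jset iv E u beta (iv g)) (Jset iv E u beta g)
                  = {r\<in>E g. \<forall>x. r * x = x * r})
       \<and> (\<forall>g\<in>G. Jset iv E u beta g \<noteq> {0})"
proof -
  obtain m xs ys where "galois_coordinates G mul iv E u beta m xs ys"
    using assms(1-3,5) unfolding beta_galois_def galois_coordinates_def galois_coordinates_axioms_def
      unital_groupoid_action_def unital_groupoid_action_axioms_def groupoid_on_def by blast
  then interpret galois_coordinates G mul iv E u beta m xs ys .
  show ?thesis
    using set_prod_J_eq set_prod_J_inv_J J_nonzero assms(4,6) by blast
qed

end
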